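(* Let $(I,\leq)$ and $(J,\preccurlyeq)$ be finite posets and $\mathcal P\colon J^{\mathrm{op}}\to\mathrm{Fun}(I,\mathrm{vect}_K)$ a functor. If $\mathcal P$ is thin (respectively flat), then for every subposet $L\subseteq J$ the restriction of $\mathcal P$ to $L^{\mathrm{op}}\subseteq J^{\mathrm{op}}$ is also thin (respectively flat).
   Context: $K$ is a field, $\mathrm{vect}_K$ finite-dimensional $K$-vector spaces, $\mathrm{Fun}(I,\mathrm{vect}_K)$ the category of functors $I\to\mathrm{vect}_K$ with natural transformations (hom sets $\mathrm{Nat}_I$). For any finite poset $J$ and functor $\mathcal P\colon J^{\mathrm{op}}\to\mathrm{Fun}(I,\mathrm{vect}_K)$: for $a\in J$, $K(a,-)\colon J\to\mathrm{vect}_K$ is the free functor ($K(a,b)=K$ if $a\preccurlyeq b$, else $0$, identity transitions between nonzero values); $\mathcal R M=\mathrm{Nat}_I(\mathcal P(-),M)$ defines $\mathcal R\colon\mathrm{Fun}(I,\mathrm{vect}_K)\to\mathrm{Fun}(J,\mathrm{vect}_K)$ with left adjoint $\mathcal L$ (given by $\mathcal LF=\mathrm{colim}\big(\bigoplus_{a_0\prec a_1}\mathcal P(a_1)\otimes F(a_0)\rightrightarrows\bigoplus_a\mathcal P(a)\otimes F(a)\big)$), so $\mathcal LK(a,-)\cong\mathcal P(a)$ and $\mathcal R\mathcal LK(a,-)\cong\mathrm{Nat}_I(\mathcal P(-),\mathcal P(a))$; $\eta_a\colon K(a,-)\to\mathcal R\mathcal LK(a,-)$ is the unit. $\mathcal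 P$ is thin if $\eta_a$ is an epimorphism (pointwise surjective) for every $a\in J$, and flat if $\eta_a$ is an isomorphism for every $a\in J$ with $\mathcal P(a)\neq0$. *)

theory Defs
  imports "Jordan_Normal_Form.Matrix"
begin

text \<open>Finite-dimensional K-vector spaces are represented as K^n (n = dimension),
  linear maps K^n -> K^m as m x n matrices; composition g o f is g * f.\<close>

definition finite_poset :: "'a set \<Rightarrow> 'a rel \<Rightarrow> bool" where
  "finite_poset A r \<longleftrightarrow> finite A \<and> r \<subseteq> A \<times> A \<and> partial_order_on A r"

text \<open>A functor (I,r) -> vect_K: dimension d i of the value at i, transition maps M i i'.\<close>
definition is_rep :: "'i set \<Rightarrow> 'i rel \<Rightarrow> ('i \<Rightarrow> nat) \<Rightarrow> ('i \<Rightarrow> 'i \<Rightarrow> 'k::field mat) \<Rightarrow> bool" where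
  "is_rep I r d M \<longleftrightarrow>
     (\<forall>i i'. (i,i') \<in> r \<longrightarrow> M i i' \<in> carrier_mat (d i') (d i)) \<and>
     (\<forall>i\<in>I. M i i = 1\<^sub>m (d i)) \<and>
     (\<forall>i i' i''. (i,i') \<in> r \<longrightarrow> (i',i'') \<in> r \<longrightarrow> M i i'' = M i' i'' * M i i')"

definition is_nat :: "'i set \<Rightarrow> 'i rel \<Rightarrow> ('i \<Rightarrow> nat) \<Rightarrow> ('i \<Rightarrow> 'i \<Rightarrow> 'k::field mat)
    \<Rightarrow> ('i \<Rightarrow> nat) \<Rightarrow> ('i \<Rightarrow> 'i \<Rightarrow> 'k mat) \<Rightarrow> ('i \<Rightarrow> 'k mat) \<Rightarrow> bool" where
  "is_nat I r d1 M1 d2 M2 \<theta> \<longleftrightarrow>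
     (\<forall>i\<in>I. \<theta> i \<in> carrier_mat (d2 i) (d1 i)) \<and>
     (\<forall>i i'. (i,i') \<in> r \<longrightarrow> \<theta> i' * M1 i i' = M2 i i' * \<theta> i)"

text \<open>A functor P : (J,rJ)^op -> Fun((I,rI), vect_K): P(j) = (d j, M j);
  for (a,b) in rJ, T a b : P(b) => P(a) is the natural transformation P(a <= b).\<close>
definition is_op_functor :: "'i set \<Rightarrow> 'i rel \<Rightarrow> 'j set \<Rightarrow> 'j rel \<Rightarrow> ('j \<Rightarrow> 'i \<Rightarrow> nat)
    \<Rightarrow> ('j \<Rightarrow> 'i \<Rightarrow> 'i \<Rightarrow> 'k::field mat) \<Rightarrow> ('j \<Rightarrow> 'j \<Rightarrow> 'i \<Rightarrow> 'k mat) \<Rightarrow> bool" where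
  "is_op_functor I rI J rJ d M T \<longleftrightarrow>
     (\<forall>j\<in>J. is_rep I rI (d j) (M j)) \<and>
     (\<forall>a b. (a,b) \<in> rJ \<longrightarrow> is_nat I rI (d b) (M b) (d a) (M a) (T a b)) \<and>
     (\<forall>a\<in>J. \<forall>i\<in>I. T a a i = 1\<^sub>m (d a i)) \<and>
     (\<forall>a b c. (a,b) \<in> rJ \<longrightarrow> (b,c) \<in> rJ \<longrightarrow> (\<forall>i\<in>I. T a c i = T a b i * T b c i))"

text \<open>The free functor K(a,-) evaluated at b: K if a <= b, else 0 (as a subset of K).\<close>
definition free_val :: "'j rel \<Rightarrow> 'j \<Rightarrow> 'j \<Rightarrow> 'k::field set" where
  "free_val rJ a b = (if (a,b) \<in> rJ then UNIV else {0})"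

text \<open>The unit eta_a at b: K(a,b) -> RLK(a,-)(b) = Nat_I(P(b),P(a)), c |-> c * P(a <= b).\<close>
definition unit_map :: "'j rel \<Rightarrow> ('j \<Rightarrow> 'i \<Rightarrow> nat) \<Rightarrow> ('j \<Rightarrow> 'j \<Rightarrow> 'i \<Rightarrow> 'k::field mat)
    \<Rightarrow> 'j \<Rightarrow> 'j \<Rightarrow> 'k \<Rightarrow> ('i \<Rightarrow> 'k mat)" where
  "unit_map rJ d T a b c = (\<lambda>i. if (a,b) \<in> rJ then c \<cdot>\<^sub>m T a b i else 0\<^sub>m (d a i) (d b i))"

definition unit_surj :: "'i set \<Rightarrow> 'i rel \<Rightarrow> 'j rel \<Rightarrow> ('j \<Rightarrow> 'i \<Rightarrow> nat)
    \<Rightarrow> ('j \<Rightarrow> 'i \<Rightarrow> 'i \<Rightarrow> 'k::field mat) \<Rightarrow> ('j \<Rightarrow> 'j \<Rightarrow> 'i \<Rightarrow> 'k mat) \<Rightarrow> 'j \<Rightarrow> 'j \<Rightarrow> bool" where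
  "unit_surj I rI rJ d M T a b \<longleftrightarrow>
     (\<forall>\<theta>. is_nat I rI (d b) (M b) (d a) (M a) \<theta> \<longrightarrow>
        (\<exists>c\<in>free_val rJ a b. \<forall>i\<in>I. \<theta> i = unit_map rJ d T a b c i))"

definition unit_inj :: "'i set \<Rightarrow> 'j rel \<Rightarrow> ('j \<Rightarrow> 'i \<Rightarrow> nat)
    \<Rightarrow> ('j \<Rightarrow> 'j \<Rightarrow> 'i \<Rightarrow> 'k::field mat) \<Rightarrow> 'j \<Rightarrow> 'j \<Rightarrow> bool" where
  "unit_inj I rJ d T a b \<longleftrightarrow>
     (\<forall>c\<in>free_val rJ a b. \<forall>c'\<in>free_val rJ a b.
        (\<forall>i\<in>I. unit_map rJ d T a b c i = unit_map rJ d T a b c' i) \<longrightarrow> c = c')"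

definition thin :: "'i set \<Rightarrow> 'i rel \<Rightarrow> 'j set \<Rightarrow> 'j rel \<Rightarrow> ('j \<Rightarrow> 'i \<Rightarrow> nat)
    \<Rightarrow> ('j \<Rightarrow> 'i \<Rightarrow> 'i \<Rightarrow> 'k::field mat) \<Rightarrow> ('j \<Rightarrow> 'j \<Rightarrow> 'i \<Rightarrow> 'k mat) \<Rightarrow> bool" where
  "thin I rI J rJ d M T \<longleftrightarrow> (\<forall>a\<in>J. \<forall>b\<in>J. unit_surj I rI rJ d M T a b)"

definition flat :: "'i set \<Rightarrow> 'i rel \<Rightarrow> 'j set \<Rightarrow> 'j rel \<Rightarrow> ('j \<Rightarrow> 'i \<Rightarrow> nat)
    \<Rightarrow> ('j \<Rightarrow> 'i \<Rightarrow> 'i \<Rightarrow> 'k::field mat) \<Rightarrow> ('j \<Rightarrow> 'j \<Rightarrow> 'i \<Rightarrow> 'k mat) \<Rightarrow> bool" where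
  "flat I rI J rJ d M T \<longleftrightarrow>
     (\<forall>a\<in>J. (\<exists>i\<in>I. d a i \<noteq> 0) \<longrightarrow>
        (\<forall>b\<in>J. unit_surj I rI rJ d M T a b \<and> unit_inj I rJ d T a b))"

end

theory Submission
  imports Defs
begin

text \<open>The component of the unit \<open>\<eta>\<^sub>a\<close> at \<open>b\<close> only involves \<open>P(a)\<close>, \<open>P(b)\<close> and
  the transition \<open>P(a \<preccurlyeq> b)\<close>, and none of these change when \<open>P\<close> is restricted to a
  subposet containing \<open>a\<close> and \<open>b\<close>. Thinness and flatness are conditions on these
  components one pair \<open>(a, b)\<close> at a time, so they pass to every subposet.\<close>

lemma free_val_restrict:
  "a \<in> L \<Longrightarrow> b \<in> L \<Longrightarrow> free_val (rJ \<inter> L \<times> L) a b = free_val rJ a b"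
  by (simp add: free_val_def)

lemma unit_map_restrict:
  "a \<in> L \<Longrightarrow> b \<in> L \<Longrightarrow> unit_map (rJ \<inter> L \<times> L) d T a b = unit_map rJ d T a b"
  by (simp add: unit_map_def fun_eq_iff)

lemma unit_surj_restrict:
  "a \<in> L \<Longrightarrow> b \<in> L \<Longrightarrow>
    unit_surj I rI (rJ \<inter> L \<times> L) d M T a b = unit_surj I rI rJ d M T a b"
  unfolding unit_surj_def by (simp add: free_val_restrict unit_map_restrict)

lemma unit_inj_restrict:
  "a \<in> L \<Longrightarrow> b \<in> L \<Longrightarrow> unit_inj I (rJ \<inter> L \<times> L) d T a b = unit_inj I rJ d T a b"
  unfolding unit_inj_def by (simp add: free_val_restrict unit_map_restrict)

lemma thin_restrict:
  assumes "thin I rI J rJ d M T" and "L \<subseteq> J"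
  shows "thin I rI L (rJ \<inter> L \<times> L) d M T"
  using assms unfolding thin_def by (auto simp: unit_surj_restrict)

lemma flat_restrict:
  assumes "flat I rI J rJ d M T" and "L \<subseteq> J"
  shows "flat I rI L (rJ \<inter> L \<times> L) d M T"
  using assms unfolding flat_def by (auto simp: unit_surj_restrict unit_inj_restrict)

theorem proposition5p9:
  fixes I :: "'i set" and rI :: "'i rel" and J :: "'j set" and rJ :: "'j rel"
    and d :: "'j \<Rightarrow> 'i \<Rightarrow> nat" and M :: "'j \<Rightarrow> 'i \<Rightarrow> 'i \<Rightarrow> 'k::field mat"
    and T :: "'j \<Rightarrow> 'j \<Rightarrow> 'i \<Rightarrow> 'k mat"
  assumes "finite_poset I rI" and "finite_poset J rJ"
    and "is_op_functor I rI J rJ d M T"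
  shows "(thin I rI J rJ d M T \<longrightarrow>
            (\<forall>L. L \<subseteq> J \<longrightarrow> thin I rI L (rJ \<inter> L \<times> L) d M T)) \<and>
         (flat I rI J rJ d M T \<longrightarrow>
            (\<forall>L. L \<subseteq> J \<longrightarrow> flat I rI L (rJ \<inter> L \<times> L) d M T))"
  using thin_restrict flat_restrict by blast

end
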